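(* In the model and protocol $\mathrm{OciorABA}^*$ described in the context, with $n\ge 3t+1$, if all honest nodes input the same message $w$, then every honest node eventually outputs $w$.
   Context: Model: there are $n$ nodes $\mathrm{Node}_1,\dots,\mathrm{Node}_n$ in an asynchronous network (every message sent between honest nodes is eventually delivered, with arbitrary adversarial delay). An adaptive adversary may corrupt (make dishonest/Byzantine) at most $t$ nodes in total; $\mathcal F\subseteq[1:n]$ denotes the set of dishonest nodes; $n\ge 3t+1$. Primitives used as black boxes: (RBC) For each $j\in[1:n]$ there is a reliable broadcast instance $\mathrm{RBC}_j$ with leader $\mathrm{Node}_j$, satisfying: Consistency (if two honest nodes output $w',w''$ then $w'=w''$); Validity (if the leader is honest and inputs $w$, every honest node eventually outputs $w$); Totality (if one honest node outputs a value, every honest node eventually outputs a value). (ABBA) For each $j\in[1:n]$ there is a binary Byzantine agreement instance $\mathrm{ABBA}_j$ (inputs and outputs in $\{0,1\}$), satisfying: Termination (if all honest nodes provide inputs, every honest node eventually outputs a value and terminates); Consistency (if an honest node outputs $b$, every honest node eventually outputs $b$); Validity (if all honest nodes input the same $b$, every honest node eventually outputs $b$). (Erasure code) An $(n,t+1)$ erasure code over an alphabet $\Sigma$: an encoder $\mathrm{Enc}$ mapping a message $w$ to $(\mathrm{Enc}_1(w),\dots,\mathrm{Enc}_n(w))\in\Sigma^n$ and a decoder $\mathrm{Dec}$ such that for every set $K\subseteq[1:n]$ with $|K|=t+1$, $\mathrm{Dec}(\{\mathrm{Enc}_j(w)\}_{j\in K})=w$. Protocol $\mathrm{OciorABA}^*$,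 code for an honest $\mathrm{Node}_i$ with input message $w_i$: (1) Compute $(y^{(i)}_1,\dots,y^{(i)}_n)=\mathrm{Enc}(w_i)$ and input $y^{(i)}_i$ into $\mathrm{RBC}_i$ (as leader). (2) Upon delivery of a value $y^{(j)}_j$ from $\mathrm{RBC}_j$ (after step (1) has been executed), if $\mathrm{Node}_i$ has not yet given an input to $\mathrm{ABBA}_j$: set $a_i[j]=1$ if $y^{(j)}_j=y^{(i)}_j$ and $a_i[j]=0$ otherwise, and input $a_i[j]$ into $\mathrm{ABBA}_j$. (3) Upon obtaining outputs from $n-t$ of the instances $\mathrm{ABBA}_1,\dots,\mathrm{ABBA}_n$, input $0$ into every $\mathrm{ABBA}_j$ to which $\mathrm{Node}_i$ has not yet given an input. (4) Upon obtaining outputs from all $n$ ABBA instances: let $S=\{j:\mathrm{ABBA}_j\text{ output }1\}$. If $|S|<t+1$, output a default value $\bot$ and terminate. Otherwise let $K$ be the set of the $t+1$ smallest elements of $S$, wait for delivery of $y^{(j)}_j$ from $\mathrm{RBC}_j$ for all $j\in K$, output $\mathrm{Dec}(\{y^{(j)}_j\}_{j\in K})$ and terminate. *)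

theory Defs
  imports Main
begin

text \<open>The adversary corrupts a set F of at most t nodes
(the set of nodes that are ever corrupted); the honest nodes are {1..n} - F.
Time is discrete (nat); an asynchronous execution is described by the
time-stamped events observed at honest nodes:
  rbc_out i j = Some (tau, v) : honest node i delivers value v from RBC_j at time tau
  abba_in i j = Some (tau, b) : honest node i inputs b into ABBA_j at time tau
  abba_out i j = Some (tau, b) : honest node i obtains output b from ABBA_j at time tau
(None means: never happens).\<close>

type_synonym 's rbc_trace = "nat \<Rightarrow> nat \<Rightarrow> (nat \<times> 's) option"
type_synonym abba_trace = "nat \<Rightarrow> nat \<Rightarrow> (nat \<times> bool) option"

definition honest :: "nat \<Rightarrow> nat set \<Rightarrow> nat set" where
  "honest n F = {1..n} - F"

text \<open>(n, t+1) erasure code: Dec K y only reads the symbols y j, j in K.\<close>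
definition erasure_code ::
  "nat \<Rightarrow> nat \<Rightarrow> ('m \<Rightarrow> nat \<Rightarrow> 's) \<Rightarrow> (nat set \<Rightarrow> (nat \<Rightarrow> 's) \<Rightarrow> 'm) \<Rightarrow> bool" where
  "erasure_code n t Enc Dec \<longleftrightarrow>
     (\<forall>K w y. K \<subseteq> {1..n} \<and> card K = t + 1 \<and> (\<forall>j\<in>K. y j = Enc w j) \<longrightarrow> Dec K y = w)"

text \<open>Reliable broadcast instances RBC_j; by step (1) of the protocol an honest leader j
inputs Enc_j(w_j).\<close>
definition rbc_props ::
  "nat \<Rightarrow> nat set \<Rightarrow> (nat \<Rightarrow> 's) \<Rightarrow> 's rbc_trace \<Rightarrow> bool" where
  "rbc_props n F leader_input rbc_out \<longleftrightarrow>
     (\<forall>j\<in>{1..n}.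
        (\<forall>i\<in>honest n F. \<forall>i'\<in>honest n F. \<forall>\<tau> \<tau>' v v'.
            rbc_out i j = Some (\<tau>, v) \<and> rbc_out i' j = Some (\<tau>', v') \<longrightarrow> v = v')
      \<and> (j \<in> honest n F \<longrightarrow> (\<forall>i\<in>honest n F. \<exists>\<tau>. rbc_out i j = Some (\<tau>, leader_input j)))
      \<and> ((\<exists>i\<in>honest n F. rbc_out i j \<noteq> None) \<longrightarrow> (\<forall>i\<in>honest n F. rbc_out i j \<noteq> None)))"

text \<open>Besides Termination, Consistency and Validity,
we impose the causal (safety) form of validity: an honest node can obtain output b
from ABBA_j at time tau only if some honest node input b into ABBA_j strictly before tau.
This is what validity means for a black box whose behaviour cannot depend on future
inputs.\<close>
definition abba_props :: "nat \<Rightarrow> nat set \<Rightarrow> abba_trace \<Rightarrow> abba_trace \<Rightarrow> bool" where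
  "abba_props n F abba_in abba_out \<longleftrightarrow>
     (\<forall>j\<in>{1..n}.
        ((\<forall>i\<in>honest n F. abba_in i j \<noteq> None) \<longrightarrow> (\<forall>i\<in>honest n F. abba_out i j \<noteq> None))
      \<and> (\<forall>i\<in>honest n F. \<forall>i'\<in>honest n F. \<forall>\<tau> b.
            abba_out i j = Some (\<tau>, b) \<longrightarrow> (\<exists>\<tau>'. abba_out i' j = Some (\<tau>', b)))
      \<and> (\<forall>b. (\<forall>i\<in>honest n F. \<exists>\<tau>. abba_in i j = Some (\<tau>, b))
              \<longrightarrow> (\<forall>i\<in>honest n F. \<exists>\<tau>. abba_out i j = Some (\<tau>, b)))
      \<and> (\<forall>i\<in>honest n F. \<forall>\<tau> b. abba_out i j = Some (\<tau>, b)
              \<longrightarrow> (\<exists>i'\<in>honest n F. \<exists>\<tau>'<\<tau>. abba_in i' j = Some (\<tau>', b))))"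

definition outputs_by :: "nat \<Rightarrow> abba_trace \<Rightarrow> nat \<Rightarrow> nat \<Rightarrow> nat" where
  "outputs_by n abba_out i \<tau> = card {j\<in>{1..n}. \<exists>\<tau>'\<le>\<tau>. \<exists>b. abba_out i j = Some (\<tau>', b)}"

definition step3_time :: "nat \<Rightarrow> nat \<Rightarrow> abba_trace \<Rightarrow> nat \<Rightarrow> nat option" where
  "step3_time n t abba_out i =
     (if \<exists>\<tau>. outputs_by n abba_out i \<tau> \<ge> n - t
      then Some (LEAST \<tau>. outputs_by n abba_out i \<tau> \<ge> n - t) else None)"

text \<open>Steps (2) and (3): the input of honest node i into ABBA_j is given by whichever
happens first: delivery from RBC_j (input 1 iff the delivered value equals Enc_j(w_i)),
or having n - t ABBA outputs (input 0).\<close>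
definition protocol_abba_input ::
  "nat \<Rightarrow> nat \<Rightarrow> ('m \<Rightarrow> nat \<Rightarrow> 's) \<Rightarrow> (nat \<Rightarrow> 'm) \<Rightarrow> 's rbc_trace \<Rightarrow> abba_trace
     \<Rightarrow> nat \<Rightarrow> nat \<Rightarrow> (nat \<times> bool) option" where
  "protocol_abba_input n t Enc w rbc_out abba_out i j =
     (case (rbc_out i j, step3_time n t abba_out i) of
        (None, None) \<Rightarrow> None
      | (Some (d, v), None) \<Rightarrow> Some (d, v = Enc (w i) j)
      | (None, Some \<tau>) \<Rightarrow> Some (\<tau>, False)
      | (Some (d, v), Some \<tau>) \<Rightarrow>
          (if d \<le> \<tau> then Some (d, v = Enc (w i) j) else Some (\<tau>, False)))"

definition smallest :: "nat \<Rightarrow> nat set \<Rightarrow> nat set" where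
  "smallest k S = {j\<in>S. card {l\<in>S. l < j} < k}"

text \<open>Step (4): output of honest node i.  None = never outputs,
Some None = outputs the default value \<bottom>, Some (Some m) = outputs m.\<close>
definition node_output ::
  "nat \<Rightarrow> nat \<Rightarrow> (nat set \<Rightarrow> (nat \<Rightarrow> 's) \<Rightarrow> 'm) \<Rightarrow> 's rbc_trace \<Rightarrow> abba_trace
     \<Rightarrow> nat \<Rightarrow> 'm option option" where
  "node_output n t Dec rbc_out abba_out i =
     (if \<forall>j\<in>{1..n}. abba_out i j \<noteq> None then
        (let S = {j\<in>{1..n}. \<exists>\<tau>. abba_out i j = Some (\<tau>, True)} in
         if card S < t + 1 then Some None
         else (let K = smallest (t + 1) S in
               if \<forall>j\<in>K. rbc_out i j \<noteq> None
               then Some (Some (Dec K (\<lambda>j. snd (the (rbc_out i j)))))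
               else None))
      else None)"

text \<open>An execution of OciorABA* : the primitives satisfy their properties and every
honest node follows steps (1)-(3) (step (4) is node_output).\<close>
definition ocior_execution ::
  "nat \<Rightarrow> nat \<Rightarrow> nat set \<Rightarrow> ('m \<Rightarrow> nat \<Rightarrow> 's) \<Rightarrow> (nat \<Rightarrow> 'm)
     \<Rightarrow> 's rbc_trace \<Rightarrow> abba_trace \<Rightarrow> abba_trace \<Rightarrow> bool" where
  "ocior_execution n t F Enc w rbc_out abba_in abba_out \<longleftrightarrow>
     rbc_props n F (\<lambda>j. Enc (w j) j) rbc_out
   \<and> abba_props n F abba_in abba_out
   \<and> (\<forall>i\<in>honest n F. \<forall>j\<in>{1..n}.
        abba_in i j = protocol_abba_input n t Enc w rbc_out abba_out i j)"

end

theory Submission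
  imports Defs
begin

text \<open>The ABBA instances of at least \<open>t + 1\<close> honest leaders output 1. Let \<open>i\<^sub>0\<close> be the
  first honest node to reach step (3), at time \<open>s\<close>. Of the \<open>n - t\<close> ABBA outputs it holds at time
  \<open>s\<close>, at least \<open>n - 2t \<ge> t + 1\<close> belong to honest leaders, and each was preceded by an honest
  input. That input cannot be a 0 from step (3), which no honest node executes before \<open>s\<close>; so it
  was made on delivery from an honest leader and is 1, since all honest nodes encode the same
  message. Conversely, an ABBA instance outputs 1 only after an honest node delivered a symbol
  matching its own encoding, so by RBC consistency every symbol used for decoding is the correct
  symbol of the common message.\<close>

lemma smallest_subset: "smallest k S \<subseteq> S"
  unfolding smallest_def by auto

lemma card_smallest:
  fixes S :: "nat set"
  assumes "finite S" and "k \<le> card S"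
  shows "card (smallest k S) = k"
proof -
  define rank where "rank j = card {l\<in>S. l < j}" for j
  have rank_less: "rank j < rank j'" if "j \<in> S" "j' \<in> S" "j < j'" for j j'
    unfolding rank_def using that assms(1) by (intro psubset_card_mono) auto
  have inj: "inj_on rank S"
    by (metis linorder_inj_onI' rank_less order_less_irrefl)
  have "rank ` S \<subseteq> {..<card S}"
    unfolding rank_def using assms(1) by (auto intro!: psubset_card_mono)
  hence rank_S: "rank ` S = {..<card S}"
    using card_image[OF inj] by (simp add: card_subset_eq)
  have "rank ` smallest k S = rank ` S \<inter> {..<k}"
    unfolding smallest_def rank_def[symmetric] by auto
  also have "\<dots> = {..<k}"
    using rank_S assms(2) by auto
  finally have "rank ` smallest k S = {..<k}" .
  thus ?thesis
    using card_image[OF inj_on_subset[OF inj smallest_subset[of k S]]] by simp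
qed

lemma honest_subset: "honest n F \<subseteq> {1..n}"
  unfolding honest_def by auto

lemma finite_honest: "finite (honest n F)"
  using finite_subset[OF honest_subset] by blast

lemma card_le_card_honest_part:
  assumes "J \<subseteq> {1..n}" and "F \<subseteq> {1..n}" and "card F \<le> t"
  shows "card J \<le> card (J \<inter> honest n F) + t"
proof -
  have "J = (J \<inter> honest n F) \<union> (J \<inter> F)"
    using assms(1) unfolding honest_def by auto
  hence "card J \<le> card (J \<inter> honest n F) + card (J \<inter> F)"
    by (metis card_Un_le)
  moreover have "card (J \<inter> F) \<le> card F"
    using assms(2) by (intro card_mono) (auto intro: finite_subset)
  ultimately show ?thesis
    using assms(3) by linarith
qed

lemma card_honest_ge:
  assumes "F \<subseteq> {1..n}" and "card F \<le> t"
  shows "n \<le> card (honest n F) + t"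
  using card_le_card_honest_part[OF order_refl assms] honest_subset[of n F]
  by (simp add: Int_absorb1)

lemma step3_timeD:
  assumes "step3_time n t abba_out i = Some s"
  shows "n - t \<le> outputs_by n abba_out i s"
  using assms unfolding step3_time_def by (auto split: if_splits intro: LeastI)

lemma node_output_decodes:
  assumes code: "erasure_code n t Enc Dec"
    and all_out: "\<forall>j\<in>{1..n}. abba_out i j \<noteq> None"
    and ones: "t + 1 \<le> card {j\<in>{1..n}. \<exists>\<tau>. abba_out i j = Some (\<tau>, True)}"
    and delivered: "\<And>j \<tau>. j \<in> {1..n} \<Longrightarrow> abba_out i j = Some (\<tau>, True) \<Longrightarrow>
      \<exists>d. rbc_out i j = Some (d, Enc m j)"
  shows "node_output n t Dec rbc_out abba_out i = Some (Some m)"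
proof -
  define S where "S = {j\<in>{1..n}. \<exists>\<tau>. abba_out i j = Some (\<tau>, True)}"
  define K where "K = smallest (t + 1) S"
  have "finite S"
    unfolding S_def by auto
  hence card_K: "card K = t + 1"
    unfolding K_def using ones S_def by (simp add: card_smallest)
  have K_S: "K \<subseteq> S"
    unfolding K_def by (rule smallest_subset)
  have K_delivered: "\<exists>d. rbc_out i j = Some (d, Enc m j)" if "j \<in> K" for j
    using that K_S delivered unfolding S_def by blast
  have "Dec K (\<lambda>j. snd (the (rbc_out i j))) = m"
  proof (rule code[unfolded erasure_code_def, rule_format], intro conjI ballI)
    show "K \<subseteq> {1..n}"
      using K_S unfolding S_def by blast
    show "card K = t + 1"
      by (fact card_K)
    show "snd (the (rbc_out i j)) = Enc m j" if "j \<in> K" for j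
      using K_delivered[OF that] by force
  qed
  moreover have "\<forall>j\<in>K. rbc_out i j \<noteq> None"
    using K_delivered by blast
  ultimately show ?thesis
    using all_out ones unfolding node_output_def Let_def S_def[symmetric] K_def[symmetric]
    by simp
qed

locale ocior_run =
  fixes n t :: nat and F :: "nat set" and Enc :: "'m \<Rightarrow> nat \<Rightarrow> 's" and w :: "nat \<Rightarrow> 'm"
    and rbc_out :: "'s rbc_trace" and abba_in abba_out :: abba_trace
  assumes execution: "ocior_execution n t F Enc w rbc_out abba_in abba_out"
    and corrupt_subset: "F \<subseteq> {1..n}"
    and card_corrupt: "card F \<le> t"
begin

lemma rbc_consistent:
  "\<lbrakk>j \<in> {1..n}; i \<in> honest n F; i' \<in> honest n F;
    rbc_out i j = Some (\<tau>, v); rbc_out i' j = Some (\<tau>', v')\<rbrakk> \<Longrightarrow> v = v'"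
  using execution unfolding ocior_execution_def rbc_props_def by blast

lemma rbc_valid:
  "\<lbrakk>j \<in> honest n F; i \<in> honest n F\<rbrakk> \<Longrightarrow> \<exists>\<tau>. rbc_out i j = Some (\<tau>, Enc (w j) j)"
  using execution honest_subset unfolding ocior_execution_def rbc_props_def by blast

lemma rbc_total:
  "\<lbrakk>j \<in> {1..n}; i \<in> honest n F; i' \<in> honest n F; rbc_out i j \<noteq> None\<rbrakk>
    \<Longrightarrow> rbc_out i' j \<noteq> None"
  using execution unfolding ocior_execution_def rbc_props_def by blast

lemma abba_termination:
  "\<lbrakk>j \<in> {1..n}; \<forall>i\<in>honest n F. abba_in i j \<noteq> None; i \<in> honest n F\<rbrakk>
    \<Longrightarrow> abba_out i j \<noteq> None"
  using execution unfolding ocior_execution_def abba_props_def by blast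

lemma abba_consistent:
  "\<lbrakk>j \<in> {1..n}; i \<in> honest n F; i' \<in> honest n F; abba_out i j = Some (\<tau>, b)\<rbrakk>
    \<Longrightarrow> \<exists>\<tau>'. abba_out i' j = Some (\<tau>', b)"
  using execution unfolding ocior_execution_def abba_props_def by blast

lemma abba_out_after_honest_in:
  "\<lbrakk>j \<in> {1..n}; i \<in> honest n F; abba_out i j = Some (\<tau>, b)\<rbrakk>
    \<Longrightarrow> \<exists>i'\<in>honest n F. \<exists>\<tau>'<\<tau>. abba_in i' j = Some (\<tau>', b)"
  using execution unfolding ocior_execution_def abba_props_def by blast

lemma abba_in_protocol:
  "\<lbrakk>i \<in> honest n F; j \<in> {1..n}\<rbrakk>
    \<Longrightarrow> abba_in i j = protocol_abba_input n t Enc w rbc_out abba_out i j"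
  using execution unfolding ocior_execution_def by blast

lemma abba_in_cases:
  assumes "i \<in> honest n F" and "j \<in> {1..n}" and "abba_in i j = Some (\<tau>, b)"
  obtains v where "rbc_out i j = Some (\<tau>, v)" and "b \<longleftrightarrow> v = Enc (w i) j"
    | "step3_time n t abba_out i = Some \<tau>" and "\<not> b"
  using assms abba_in_protocol[OF assms(1,2)]
  unfolding protocol_abba_input_def by (auto split: option.splits if_splits)

lemma abba_in_defined:
  assumes "i \<in> honest n F" and "j \<in> {1..n}"
    and "rbc_out i j \<noteq> None \<or> step3_time n t abba_out i \<noteq> None"
  shows "abba_in i j \<noteq> None"
  using assms abba_in_protocol[OF assms(1,2)]
  unfolding protocol_abba_input_def by (auto split: option.splits)

lemma step3_reached:
  assumes "\<forall>j\<in>honest n F. abba_out i j \<noteq> None"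
  shows "step3_time n t abba_out i \<noteq> None"
proof -
  define T where "T = Max ((\<lambda>j. fst (the (abba_out i j))) ` honest n F)"
  have "honest n F \<subseteq> {j\<in>{1..n}. \<exists>\<tau>\<le>T. \<exists>b. abba_out i j = Some (\<tau>, b)}"
  proof
    fix j assume j: "j \<in> honest n F"
    obtain \<tau> b where out: "abba_out i j = Some (\<tau>, b)"
      using assms j by fastforce
    have "fst (the (abba_out i j)) \<le> T"
      unfolding T_def using j finite_honest by (intro Max_ge) auto
    hence "\<tau> \<le> T"
      using out by simp
    thus "j \<in> {j\<in>{1..n}. \<exists>\<tau>\<le>T. \<exists>b. abba_out i j = Some (\<tau>, b)}"
      using out j honest_subset by blast
  qed
  hence "card (honest n F) \<le> outputs_by n abba_out i T"
    unfolding outputs_by_def by (intro card_mono) auto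
  moreover have "n \<le> card (honest n F) + t"
    using card_honest_ge[OF corrupt_subset card_corrupt] .
  ultimately have "n - t \<le> outputs_by n abba_out i T"
    by linarith
  thus ?thesis
    unfolding step3_time_def by auto
qed

end

locale ocior_uniform_run = ocior_run +
  fixes w0 :: 'm
  assumes honest_input: "i \<in> honest n F \<Longrightarrow> w i = w0"
begin

lemma rbc_honest_leader:
  "\<lbrakk>j \<in> honest n F; i \<in> honest n F\<rbrakk> \<Longrightarrow> \<exists>\<tau>. rbc_out i j = Some (\<tau>, Enc w0 j)"
  using rbc_valid honest_input by metis

lemma abba_out_honest_leader:
  assumes "i \<in> honest n F" and "j \<in> honest n F"
  shows "abba_out i j \<noteq> None"
proof -
  have "j \<in> {1..n}"
    using assms(2) honest_subset by blast
  moreover have "\<forall>i'\<in>honest n F. abba_in i' j \<noteq> None"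
    using abba_in_defined rbc_honest_leader assms(2) \<open>j \<in> {1..n}\<close> by blast
  ultimately show ?thesis
    using abba_termination assms(1) by blast
qed

lemma abba_out_defined:
  assumes "i \<in> honest n F" and "j \<in> {1..n}"
  shows "abba_out i j \<noteq> None"
proof -
  have "\<forall>i'\<in>honest n F. abba_in i' j \<noteq> None"
    using abba_in_defined step3_reached abba_out_honest_leader assms(2) by blast
  thus ?thesis
    using abba_termination assms by blast
qed

lemma abba_one_delivers:
  assumes i: "i \<in> honest n F" and j: "j \<in> {1..n}" and out: "abba_out i j = Some (\<tau>, True)"
  shows "\<exists>d. rbc_out i j = Some (d, Enc w0 j)"
proof -
  obtain i' \<tau>' where i': "i' \<in> honest n F" and input: "abba_in i' j = Some (\<tau>', True)"
    using abba_out_after_honest_in[OF j i out] by blast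
  obtain v where delivered': "rbc_out i' j = Some (\<tau>', v)" and "v = Enc w0 j"
  proof (rule abba_in_cases[OF i' j input])
    fix v assume "rbc_out i' j = Some (\<tau>', v)" and "True \<longleftrightarrow> v = Enc (w i') j"
    thus thesis
      using that honest_input[OF i'] by simp
  qed simp
  moreover obtain d v' where "rbc_out i j = Some (d, v')"
    using rbc_total[OF j i' i] delivered' by (cases "rbc_out i j") auto
  ultimately show ?thesis
    using rbc_consistent[OF j i i' _ delivered'] by blast
qed

lemma abba_output_before_step3_is_one:
  assumes i: "i \<in> honest n F" and j: "j \<in> honest n F" and out: "abba_out i j = Some (\<tau>, b)"
    and no_step3_yet: "\<forall>i'\<in>honest n F. \<forall>s. step3_time n t abba_out i' = Some s \<longrightarrow> \<tau> \<le> s"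
  shows b
proof -
  have j_range: "j \<in> {1..n}"
    using j honest_subset by blast
  obtain i' \<tau>' where i': "i' \<in> honest n F" and "\<tau>' < \<tau>" and input: "abba_in i' j = Some (\<tau>', b)"
    using abba_out_after_honest_in[OF j_range i out] by blast
  show b
  proof (rule abba_in_cases[OF i' j_range input])
    fix v assume "rbc_out i' j = Some (\<tau>', v)" and "b \<longleftrightarrow> v = Enc (w i') j"
    thus b
      using rbc_honest_leader[OF j i'] honest_input[OF i'] by auto
  next
    assume "step3_time n t abba_out i' = Some \<tau>'"
    thus b
      using no_step3_yet i' \<open>\<tau>' < \<tau>\<close> by fastforce
  qed
qed

lemma honest_leaders_agree_on_one:
  assumes "3 * t + 1 \<le> n"
  obtains J where "J \<subseteq> honest n F" and "t + 1 \<le> card J"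
    and "\<And>i j. \<lbrakk>i \<in> honest n F; j \<in> J\<rbrakk> \<Longrightarrow> \<exists>\<tau>. abba_out i j = Some (\<tau>, True)"
proof -
  define step3 where "step3 i = the (step3_time n t abba_out i)" for i
  have step3_Some: "step3_time n t abba_out i = Some (step3 i)" if "i \<in> honest n F" for i
    unfolding step3_def using step3_reached abba_out_honest_leader that by auto
  have "0 < card (honest n F)"
    using card_honest_ge[OF corrupt_subset card_corrupt] assms by linarith
  hence "Min (step3 ` honest n F) \<in> step3 ` honest n F"
    using finite_honest by (intro Min_in) auto
  then obtain i0 where i0: "i0 \<in> honest n F" and i0_min: "step3 i0 = Min (step3 ` honest n F)"
    by auto
  have first: "\<forall>i\<in>honest n F. step3 i0 \<le> step3 i"
    unfolding i0_min using finite_honest by simp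
  define J0 where "J0 = {j\<in>{1..n}. \<exists>\<tau>\<le>step3 i0. \<exists>b. abba_out i0 j = Some (\<tau>, b)}"
  have "n - t \<le> card J0"
    using step3_timeD[OF step3_Some[OF i0]] unfolding J0_def outputs_by_def .
  moreover have "card J0 \<le> card (J0 \<inter> honest n F) + t"
    by (rule card_le_card_honest_part[OF _ corrupt_subset card_corrupt]) (auto simp: J0_def)
  ultimately have "t + 1 \<le> card (J0 \<inter> honest n F)"
    using assms by linarith
  moreover have "\<exists>\<tau>. abba_out i j = Some (\<tau>, True)"
    if i: "i \<in> honest n F" and j: "j \<in> J0 \<inter> honest n F" for i j
  proof -
    obtain \<tau> b where out: "abba_out i0 j = Some (\<tau>, b)" and "\<tau> \<le> step3 i0"
      using j unfolding J0_def by blast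
    have "\<forall>i'\<in>honest n F. \<forall>s. step3_time n t abba_out i' = Some s \<longrightarrow> \<tau> \<le> s"
      using first step3_Some \<open>\<tau> \<le> step3 i0\<close> by fastforce
    hence b
      using abba_output_before_step3_is_one[OF i0 _ out] j by blast
    moreover have "j \<in> {1..n}"
      using j unfolding J0_def by blast
    ultimately show ?thesis
      using abba_consistent[OF _ i0 i out] by auto
  qed
  ultimately show thesis
    using that by blast
qed

end

theorem theorem2:
  fixes n t :: nat and F :: "nat set"
    and Enc :: "'m \<Rightarrow> nat \<Rightarrow> 's" and Dec :: "nat set \<Rightarrow> (nat \<Rightarrow> 's) \<Rightarrow> 'm"
    and w :: "nat \<Rightarrow> 'm" and w0 :: 'm
    and rbc_out :: "'s rbc_trace" and abba_in abba_out :: abba_trace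
  assumes "n \<ge> 3 * t + 1"
    and "F \<subseteq> {1..n}" and "card F \<le> t"
    and "erasure_code n t Enc Dec"
    and "ocior_execution n t F Enc w rbc_out abba_in abba_out"
    and "\<forall>i\<in>honest n F. w i = w0"
  shows "\<forall>i\<in>honest n F. node_output n t Dec rbc_out abba_out i = Some (Some w0)"
proof
  interpret ocior_uniform_run n t F Enc w rbc_out abba_in abba_out w0
    using assms by unfold_locales auto
  obtain J where J: "J \<subseteq> honest n F" "t + 1 \<le> card J"
    and ones: "\<And>i j. \<lbrakk>i \<in> honest n F; j \<in> J\<rbrakk> \<Longrightarrow> \<exists>\<tau>. abba_out i j = Some (\<tau>, True)"
    using honest_leaders_agree_on_one assms(1) by blast
  fix i assume i: "i \<in> honest n F"
  have "J \<subseteq> {j\<in>{1..n}. \<exists>\<tau>. abba_out i j = Some (\<tau>, True)}"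
    using J(1) honest_subset ones[OF i] by blast
  hence "t + 1 \<le> card {j\<in>{1..n}. \<exists>\<tau>. abba_out i j = Some (\<tau>, True)}"
    using J(2) card_mono[of "{j\<in>{1..n}. \<exists>\<tau>. abba_out i j = Some (\<tau>, True)}" J] by simp
  moreover have "\<forall>j\<in>{1..n}. abba_out i j \<noteq> None"
    using abba_out_defined[OF i] by blast
  ultimately show "node_output n t Dec rbc_out abba_out i = Some (Some w0)"
    using node_output_decodes[OF assms(4)] abba_one_delivers[OF i] by blast
qed

end
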